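(* Let $f(z)=\sum_{k=0}^\infty a_k z^k$ be an entire function with $a_k>0$ for all $k$ and $a_0=a_1=1$, satisfying the hypotheses: $3\le q_2\le q_3\le q_4\le\cdots$, and for every integer $j_0\ge 2$ with $q_{j_0}<4$ and $q_{j_0+1}\ge 4$, either $q_{j_0}\ge 3.4303$ or ($j_0\ge 3$ and $q_{j_0-1}/q_{j_0+1}\ge 0.525$). Let $\varphi(z):=f(-z)$ and, for $k\ge 2$, $\rho_k:=q_2q_3\cdots q_k\sqrt{q_{k+1}}$. Then for every $k\ge 2$, $$(-1)^k\varphi(\rho_k)\ge 0.$$
   Context: Here $q_n:=\frac{a_{n-1}^2}{a_{n-2}a_n}$ for $n\ge 2$ (these are the same for $f$ and $\varphi$ ). With $a_0=a_1=1$, $\varphi(z)=1-z+\sum_{k=2}^\infty \frac{(-1)^k z^k}{q_2^{k-1}q_3^{k-2}\cdots q_{k-1}^2 q_k}$. *)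

theory Defs
  imports Complex_Main
begin

definition qq :: "(nat \<Rightarrow> real) \<Rightarrow> nat \<Rightarrow> real" where
  "qq a n = (a (n - 1))^2 / (a (n - 2) * a n)"

definition rho :: "(nat \<Rightarrow> real) \<Rightarrow> nat \<Rightarrow> real" where
  "rho a k = (\<Prod>i=2..k. qq a i) * sqrt (qq a (k + 1))"

definition phi :: "(nat \<Rightarrow> real) \<Rightarrow> real \<Rightarrow> real" where
  "phi a x = (\<Sum>k. a k * (- x) ^ k)"

end

theory Submission
  imports Defs
begin

text \<open>Put \<open>t\<^sub>j = a\<^sub>j \<rho>\<^sub>k\<^sup>j\<close>, so that \<open>(-1)\<^sup>k \<phi>(\<rho>\<^sub>k) = \<Sum>\<^sub>j (-1)\<^sup>j\<^sup>-\<^sup>k t\<^sub>j\<close>.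
  Since \<open>a\<^sub>j\<^sub>+\<^sub>1 q\<^sub>2 \<cdots> q\<^sub>j\<^sub>+\<^sub>1 = a\<^sub>j\<close>, the terms increase up to \<open>j = k\<close> and decrease
  afterwards, so the Leibniz bounds for the two alternating tails on either side of the peak give
  \<open>(-1)\<^sup>k \<phi>(\<rho>\<^sub>k) \<ge> (t\<^sub>k - t\<^sub>k\<^sub>+\<^sub>1 + t\<^sub>k\<^sub>+\<^sub>2 - t\<^sub>k\<^sub>+\<^sub>3) - (t\<^sub>k\<^sub>-\<^sub>1 - t\<^sub>k\<^sub>-\<^sub>2 + t\<^sub>k\<^sub>-\<^sub>3)\<close>.
  Using the monotonicity of the \<open>q\<^sub>j\<close>, this window is at least \<open>t\<^sub>k\<close> times
  \<open>1 - 2/s + (\<beta> - s\<^sup>3\<beta>\<^sup>3) + (\<alpha> - s\<alpha>\<^sup>2/3)\<close> with \<open>s = \<surd>q\<^sub>k\<^sub>+\<^sub>1\<close>,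
  \<open>\<alpha> = 1/(q\<^sub>k q\<^sub>k\<^sub>+\<^sub>1)\<close>, \<open>\<beta> = 1/(q\<^sub>k\<^sub>+\<^sub>1 q\<^sub>k\<^sub>+\<^sub>2)\<close>. Both brackets are increasing in \<open>\<alpha>\<close>
  resp. \<open>\<beta>\<close> on the relevant range, so it suffices to check the extreme values allowed by the
  hypothesis at \<open>j\<^sub>0 = k + 1\<close>; each case is a polynomial inequality in \<open>s\<close>.\<close>

section \<open>A polynomial estimate\<close>

lemma cubic_profile_mono:
  fixes y0 y A B c :: real
  assumes "0 \<le> y0" "y0 \<le> y" "0 \<le> A" "0 \<le> B" "3*A*y^2 + 2*B*y \<le> c"
  shows "c*y0 - A*y0^3 - B*y0^2 \<le> c*y - A*y^3 - B*y^2"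
proof -
  have "y*y0 \<le> y^2" "y0^2 \<le> y^2" using assms(1,2)
    by (auto simp: power2_eq_square intro: mult_mono)
  then have "A*(y^2 + y*y0 + y0^2) \<le> A*(3*y^2)" using assms(3) by (intro mult_left_mono) auto
  moreover have "B*(y + y0) \<le> B*(2*y)" using assms by (intro mult_left_mono) auto
  ultimately have "0 \<le> (y - y0) * (c - A*(y^2 + y*y0 + y0^2) - B*(y + y0))"
    using assms by (intro mult_nonneg_nonneg) auto
  also have "\<dots> = (c*y - A*y^3 - B*y^2) - (c*y0 - A*y0^3 - B*y0^2)"
    by (simp add: algebra_simps power2_eq_square power3_eq_cube)
  finally show ?thesis by simp
qed

text \<open>The rationals \<open>433/250\<close> and \<open>18521/10000\<close> are lower bounds for \<open>\<surd>3\<close> and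
  \<open>\<surd>3.4303\<close>. Each polynomial inequality below is certified by the expansion in powers of
  \<open>s - s\<^sub>0\<close> at such a bound \<open>s\<^sub>0\<close>, whose coefficients are all positive.\<close>

lemma peak_poly_small_q_nonneg:
  fixes s :: real
  assumes "433/250 \<le> s"
  shows "0 \<le> 192*s^7 - 384*s^6 + 48*s^5 - 3*s^4 + 192*s^3 - 64"
proof -
  define t where "t = s - 433/250"
  have "0 \<le> t" using assms by (simp add: t_def)
  then have "0 \<le> ((((((((192::real) * t + 242976/125) * t + 127386912/15625) * t + 7050298941/390625) * t + 1083061353414/48828125) * t + 881780575609911/61035156250) * t + 32015780716354473/7629394531250) * t + 2026713223949155873/7629394531250000)"
    by simp
  also have "\<dots> = 192*s^7 - 384*s^6 + 48*s^5 - 3*s^4 + 192*s^3 - 64"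
    unfolding t_def by algebra
  finally show ?thesis .
qed

lemma peak_poly_large_q_nonneg:
  fixes s :: real
  assumes "18521/10000 \<le> s"
  shows "0 \<le> 3*s^7 - 6*s^6 + 3*s^3 - 1"
proof -
  define t where "t = s - 18521/10000"
  have "0 \<le> t" using assms by (simp add: t_def)
  then have "0 \<le> ((((((((3::real) * t + 328941/10000) * t + 14943168783/100000000) * t + 71672496549981/200000000000) * t + 952253634516538101/2000000000000000) * t + 33063372144420879925863/100000000000000000000) * t + 93944337436055407772909541/1000000000000000000000000) * t + 1504406030699827439775764123/10000000000000000000000000000)"
    by simp
  also have "\<dots> = 3*s^7 - 6*s^6 + 3*s^3 - 1"
    unfolding t_def by algebra
  finally show ?thesis .
qed

lemma peak_poly_ratio_nonneg:
  fixes s :: real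
  assumes "433/250 \<le> s"
  shows "0 \<le> 3*s^9 - 6*s^8 + 183/40*s^5 - s^2 - 27783/64000"
proof -
  define t where "t = s - 433/250"
  have "0 \<le> t" using assms by (simp add: t_def)
  then have "0 \<le> ((((((((((3::real) * t + 10191/250) * t + 3763203/15625) * t + 3145877931/3906250) * t + 405376530093/244140625) * t + 65662709603697/30517578125) * t + 51974213792042511/30517578125000) * t + 5730625191775543327/7629394531250000) * t + 2206370742268131490057/15258789062500000000) * t + 5272064817904106833267/1907348632812500000000)"
    by simp
  also have "\<dots> = 3*s^9 - 6*s^8 + 183/40*s^5 - s^2 - 27783/64000"
    unfolding t_def by algebra
  finally show ?thesis .
qed

definition peak_estimate :: "real \<Rightarrow> real \<Rightarrow> real \<Rightarrow> real" where
  "peak_estimate s \<alpha> \<beta> = 1 - 2/s + (\<beta> - s^3*\<beta>^3) + (\<alpha> - s/3*\<alpha>^2)"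

lemma peak_estimate_beta_mono:
  fixes s \<beta>0 \<beta> :: real
  assumes s: "433/250 \<le> s" and \<beta>: "0 \<le> \<beta>0" "\<beta>0 \<le> \<beta>" "\<beta> \<le> 1/s^4"
  shows "\<beta>0 - s^3*\<beta>0^3 \<le> \<beta> - s^3*\<beta>^3"
proof -
  have sp: "0 < s" using s by simp
  have "(433/250::real)^5 \<le> s^5" using s by (intro power_mono) auto
  then have s5: "3 \<le> s^5" by (simp add: power_divide)
  have "s^3*\<beta>^2 \<le> s^3*(1/s^4)^2" using \<beta> sp by (intro mult_left_mono power_mono) auto
  also have "\<dots> = 1/s^5" using sp by (simp add: field_simps)
  also have "\<dots> \<le> 1/3" using s5 sp by (simp add: divide_simps)
  finally have "3*s^3*\<beta>^2 + 2*0*\<beta> \<le> 1" by simp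
  then show ?thesis using cubic_profile_mono[of \<beta>0 \<beta> "s^3" 0 1] \<beta> sp by simp
qed

lemma peak_estimate_alpha_mono:
  fixes s \<alpha>0 \<alpha> :: real
  assumes s: "1 \<le> s" and \<alpha>: "0 \<le> \<alpha>0" "\<alpha>0 \<le> \<alpha>" "\<alpha> \<le> 1/(3*s^2)"
  shows "\<alpha>0 - s/3*\<alpha>0^2 \<le> \<alpha> - s/3*\<alpha>^2"
proof -
  have "s*\<alpha> \<le> s*(1/(3*s^2))" using \<alpha> s by (intro mult_left_mono) auto
  also have "\<dots> \<le> 1/3" using s by (simp add: field_simps power2_eq_square)
  finally have "3*0*\<alpha>^2 + 2*(s/3)*\<alpha> \<le> 1" by simp
  then show ?thesis using cubic_profile_mono[of \<alpha>0 \<alpha> 0 "s/3" 1] \<alpha> s by simp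
qed

lemma peak_estimate_nonneg_ratio_case:
  fixes s \<alpha> \<beta> :: real
  assumes s: "433/250 \<le> s"
    and \<alpha>: "1/s^4 \<le> \<alpha>" "\<alpha> \<le> 1/(3*s^2)"
    and \<beta>: "21/40*\<alpha> \<le> \<beta>" "\<beta> \<le> 1/s^4"
  shows "0 \<le> peak_estimate s \<alpha> \<beta>"
proof -
  have sp: "0 < s" using s by simp
  have "0 \<le> 1/s^4" using sp by simp
  then have \<alpha>0: "0 \<le> \<alpha>" using \<alpha>(1) by linarith
  \<comment> \<open>bounding the \<open>\<beta>\<close>-bracket by its value at \<open>21\<alpha>/40\<close> leaves a single cubic profile in \<open>\<alpha>\<close>\<close>
  have \<beta>_part: "21/40*\<alpha> - s^3*(21/40*\<alpha>)^3 \<le> \<beta> - s^3*\<beta>^3"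
    using peak_estimate_beta_mono[OF s, of "21/40*\<alpha>" \<beta>] \<alpha>0 \<beta> by simp
  have "s^3*\<alpha>^2 \<le> s^3*(1/(3*s^2))^2" using \<alpha> \<alpha>0 sp by (intro mult_left_mono power_mono) auto
  also have "\<dots> = 1/(9*s)" using sp by (simp add: field_simps power2_eq_square power3_eq_cube)
  also have "\<dots> \<le> 1" using s by (simp add: field_simps)
  finally have "s^3*\<alpha>^2 \<le> 1" .
  moreover have "s*\<alpha> \<le> s*(1/(3*s^2))" using \<alpha> sp by (intro mult_left_mono) auto
  moreover have "s*(1/(3*s^2)) \<le> 1/3" using s by (simp add: field_simps power2_eq_square)
  moreover have "3*((21/40)^3*s^3)*\<alpha>^2 = 27783/64000*(s^3*\<alpha>^2)" by (simp add: power_divide)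
  ultimately have "3*((21/40)^3*s^3)*\<alpha>^2 + 2*(s/3)*\<alpha> \<le> 61/40" by linarith
  then have "61/40*(1/s^4) - ((21/40)^3*s^3)*(1/s^4)^3 - s/3*(1/s^4)^2
      \<le> 61/40*\<alpha> - ((21/40)^3*s^3)*\<alpha>^3 - s/3*\<alpha>^2"
    using cubic_profile_mono[of "1/s^4" \<alpha> "(21/40)^3*s^3" "s/3" "61/40"] \<alpha> sp by simp
  moreover have "1 - 2/s + (61/40*(1/s^4) - ((21/40)^3*s^3)*(1/s^4)^3 - s/3*(1/s^4)^2)
      = ((3::real)*s^9 - 6*s^8 + 183/40*s^5 - s^2 - 27783/64000) / (3*s^9)"
    using sp by (simp add: field_simps) algebra
  moreover have "0 \<le> ((3::real)*s^9 - 6*s^8 + 183/40*s^5 - s^2 - 27783/64000) / (3*s^9)"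
    using peak_poly_ratio_nonneg[OF s] sp by simp
  moreover have "21/40*\<alpha> - s^3*(21/40*\<alpha>)^3 + (\<alpha> - s/3*\<alpha>^2)
      = 61/40*\<alpha> - ((21/40)^3*s^3)*\<alpha>^3 - s/3*\<alpha>^2"
    by algebra
  ultimately show ?thesis using \<beta>_part unfolding peak_estimate_def by linarith
qed

lemma peak_estimate_nonneg:
  fixes s \<alpha> \<beta> :: real
  assumes s: "433/250 \<le> s"
    and \<alpha>: "1/s^4 \<le> \<alpha>" "\<alpha> \<le> 1/(3*s^2)"
    and \<beta>: "0 \<le> \<beta>" "\<beta> \<le> 1/s^4"
    and cases: "2 \<le> s \<or> 1/(4*s^2) \<le> \<beta> \<or> 18521/10000 \<le> s \<or> 21/40*\<alpha> \<le> \<beta>"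
  shows "0 \<le> peak_estimate s \<alpha> \<beta>"
proof -
  have sp: "0 < s" using s by simp
  have "0 \<le> 1/s^4" using sp by simp
  then have \<alpha>_part: "1/s^4 - s/3*(1/s^4)^2 \<le> \<alpha> - s/3*\<alpha>^2"
    using s \<alpha> by (intro peak_estimate_alpha_mono) auto
  have \<beta>_part: "0 \<le> \<beta> - s^3*\<beta>^3"
    using peak_estimate_beta_mono[OF s, of 0 \<beta>] \<beta> by simp
  from cases consider "2 \<le> s" | "1/(4*s^2) \<le> \<beta>" | "18521/10000 \<le> s" | "21/40*\<alpha> \<le> \<beta>"
    by blast
  then show ?thesis
  proof cases
    case 1
    then have "0 \<le> 1 - 2/s" by (simp add: field_simps)
    moreover have "0 \<le> \<alpha> - s/3*\<alpha>^2"
      using peak_estimate_alpha_mono[of s 0 \<alpha>] 1 \<alpha> \<open>0 \<le> 1/s^4\<close> by simp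
    ultimately show ?thesis using \<beta>_part unfolding peak_estimate_def by linarith
  next
    case 2
    have "1/(4*s^2) - s^3*(1/(4*s^2))^3 \<le> \<beta> - s^3*\<beta>^3"
      using peak_estimate_beta_mono[OF s, of "1/(4*s^2)" \<beta>] 2 \<beta> by simp
    moreover have "1 - 2/s + (1/(4*s^2) - s^3*(1/(4*s^2))^3) + (1/s^4 - s/3*(1/s^4)^2)
        = ((192::real)*s^7 - 384*s^6 + 48*s^5 - 3*s^4 + 192*s^3 - 64) / (192*s^7)"
      using sp by (simp add: field_simps) algebra
    moreover have "0 \<le> ((192::real)*s^7 - 384*s^6 + 48*s^5 - 3*s^4 + 192*s^3 - 64) / (192*s^7)"
      using peak_poly_small_q_nonneg[OF s] sp by simp
    ultimately show ?thesis using \<alpha>_part unfolding peak_estimate_def by linarith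
  next
    case 3
    have "1 - 2/s + (1/s^4 - s/3*(1/s^4)^2) = ((3::real)*s^7 - 6*s^6 + 3*s^3 - 1) / (3*s^7)"
      using sp by (simp add: field_simps) algebra
    moreover have "0 \<le> ((3::real)*s^7 - 6*s^6 + 3*s^3 - 1) / (3*s^7)"
      using peak_poly_large_q_nonneg[OF 3] sp by simp
    ultimately show ?thesis using \<alpha>_part \<beta>_part unfolding peak_estimate_def by linarith
  next
    case 4
    show ?thesis using s \<alpha> 4 \<beta>(2) by (rule peak_estimate_nonneg_ratio_case)
  qed
qed

lemma peak_estimate_nonneg_of_q:
  fixes u x v :: real
  assumes u: "3 \<le> u" "u \<le> x" and v: "x \<le> v"
    and cond: "x < 4 \<Longrightarrow> 4 \<le> v \<Longrightarrow> 3.4303 \<le> x \<or> 0.525 \<le> u / v"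
  shows "0 \<le> peak_estimate (sqrt x) (1/(x*u)) (1/(x*v))"
proof (rule peak_estimate_nonneg)
  have x: "0 \<le> x" "sqrt x^2 = x" using u by auto
  have x4: "sqrt x^4 = x*x" using x(2) by (metis power2_eq_square power_mult numeral_Bit0 mult_2)
  have pos: "0 < u" "0 < v" using u v by auto
  show "433/250 \<le> sqrt x"
    using u real_le_rsqrt[of "433/250" x] by (simp add: power2_eq_square)
  have "x*u \<le> x*x" "x*x \<le> x*v" using u v x by (auto intro: mult_left_mono)
  then show "1/sqrt x^4 \<le> 1/(x*u)" "1/(x*v) \<le> 1/sqrt x^4"
    unfolding x4 using u pos by (auto intro!: divide_left_mono)
  have "3*x \<le> u*x" using u x by (intro mult_right_mono) auto
  then show "1/(x*u) \<le> 1/(3*sqrt x^2)"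
    unfolding x(2) using u by (auto simp: mult.commute intro!: divide_left_mono)
  show "0 \<le> 1/(x*v)" using x pos by simp
  show "2 \<le> sqrt x \<or> 1/(4*sqrt x^2) \<le> 1/(x*v) \<or> 18521/10000 \<le> sqrt x \<or> 21/40*(1/(x*u)) \<le> 1/(x*v)"
  proof -
    have "4 \<le> x \<or> v < 4 \<or> 3.4303 \<le> x \<or> 0.525 \<le> u / v" using cond by force
    then consider "4 \<le> x" | "v < 4" | "3.4303 \<le> x" | "0.525 \<le> u / v" by blast
    then show ?thesis
    proof cases
      case 1
      then show ?thesis using real_le_rsqrt[of 2 x] by simp
    next
      case 2
      then have "x*v \<le> x*4" using x by (intro mult_left_mono) auto
      then show ?thesis unfolding x(2) using u pos by (auto intro!: divide_left_mono)
    next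
      case 3
      then show ?thesis using real_le_rsqrt[of "18521/10000" x] by (simp add: power2_eq_square)
    next
      case 4
      then show ?thesis using pos u by (simp add: field_simps)
    qed
  qed
qed

section \<open>Alternating sums around a peak\<close>

lemma alternating_sum_le_three_terms:
  fixes c :: "nat \<Rightarrow> real"
  assumes nonneg: "\<And>i. 0 \<le> c i" and antimono: "\<And>i. Suc i < n \<Longrightarrow> c (Suc i) \<le> c i"
    and n: "2 \<le> n"
  shows "(\<Sum>i<n. (-1)^i * c i) \<le> c 0 - c 1 + (if 2 < n then c 2 else 0)"
proof -
  define d where "d i = (if i < n then c i else 0)" for i
  have "d \<longlonglongrightarrow> 0"
    unfolding d_def by (intro tendsto_eventually eventually_sequentiallyI[of n]) auto
  moreover have "0 \<le> d i" "d (Suc i) \<le> d i" for i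
    using nonneg antimono by (auto simp: d_def)
  ultimately have "(\<Sum>i. (-1)^i * d i) \<le> (\<Sum>i<2*1+1. (-1)^i * d i)"
    by (rule summable_Leibniz'(4))
  moreover have "(\<lambda>i. (-1)^i * d i) sums (\<Sum>i<n. (-1)^i * c i)"
    using sums_finite[of "{..<n}" "\<lambda>i. (-1)^i * d i"] by (simp add: d_def)
  ultimately show ?thesis using n by (auto simp: sums_iff eval_nat_numeral d_def)
qed

lemma alternating_suminf_split:
  fixes t :: "nat \<Rightarrow> real"
  assumes "summable (\<lambda>n. (-1)^n * t (n + k))"
  shows "(-1)^k * (\<Sum>j. (-1)^j * t j) = (\<Sum>n. (-1)^n * t (n + k)) - (\<Sum>i<k. (-1)^i * t (k - Suc i))"
proof -
  define g where "g j = (-1)^k * ((-1)^j * t j)" for j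
  have sign: "(-1::real)^m * (-1)^m = 1" for m by (simp flip: power_mult_distrib)
  have g_tail: "g (n + k) = (-1)^n * t (n + k)" for n
    using sign[of k] by (simp add: g_def power_add)
  have g_head: "g (k - Suc i) = - ((-1)^i * t (k - Suc i))" if ik: "i < k" for i
  proof -
    obtain d where "k = Suc i + d" using less_imp_Suc_add[OF ik] by auto
    then show ?thesis using sign[of d] by (simp add: g_def power_add)
  qed
  have "summable (\<lambda>n. g (n + k))" unfolding g_tail by (rule assms)
  then have g_summable: "summable g" by simp
  have "summable (\<lambda>j. (-1)^k * g j)" using g_summable by (rule summable_mult)
  then have "summable (\<lambda>j. (-1)^j * t j)"
    using sign[of k] by (simp add: g_def mult.assoc[symmetric])
  then have "(-1)^k * (\<Sum>j. (-1)^j * t j) = suminf g"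
    unfolding g_def by (rule suminf_mult[symmetric])
  also have "\<dots> = (\<Sum>n. g (n + k)) + (\<Sum>i<k. g (k - Suc i))"
    using g_summable by (simp add: suminf_split_initial_segment sum.nat_diff_reindex)
  also have "\<dots> = (\<Sum>n. (-1)^n * t (n + k)) - (\<Sum>i<k. (-1)^i * t (k - Suc i))"
    by (simp add: g_tail g_head sum_negf)
  finally show ?thesis .
qed

text \<open>The tail from \<open>t\<^sub>k\<close> on and the head read backwards from \<open>t\<^sub>k\<^sub>-\<^sub>1\<close> are both
  Leibniz series, so each is bounded by its first few terms.\<close>

lemma alternating_peak_lower_bound:
  fixes t :: "nat \<Rightarrow> real"
  assumes nonneg: "\<And>j. 0 \<le> t j" and lim: "t \<longlonglongrightarrow> 0"
    and inc: "\<And>j. j < k \<Longrightarrow> t j \<le> t (Suc j)"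
    and dec: "\<And>j. k \<le> j \<Longrightarrow> t (Suc j) \<le> t j"
    and k: "2 \<le> k"
  shows "(t k - t (k+1) + t (k+2) - t (k+3)) - (t (k-1) - t (k-2) + (if 3 \<le> k then t (k-3) else 0))
    \<le> (-1)^k * (\<Sum>j. (-1)^j * t j)"
proof -
  define b where "b n = t (n + k)" for n
  have b: "b \<longlonglongrightarrow> 0" "0 \<le> b n" "b (Suc n) \<le> b n" for n
    using LIMSEQ_ignore_initial_segment[OF lim, of k] nonneg dec by (simp_all add: b_def[abs_def])
  have "(\<Sum>i<2*2. (-1)^i * b i) \<le> (\<Sum>n. (-1)^n * b n)"
    by (rule summable_Leibniz'(2)[OF b])
  then have tail: "t k - t (k+1) + t (k+2) - t (k+3) \<le> (\<Sum>n. (-1)^n * t (n + k))"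
    by (simp add: b_def eval_nat_numeral ac_simps)
  have "t (k - Suc (Suc i)) \<le> t (k - Suc i)" if "Suc i < k" for i
    using inc[of "k - Suc (Suc i)"] that by (simp add: Suc_diff_Suc)
  then have "(\<Sum>i<k. (-1)^i * t (k - Suc i))
      \<le> t (k - Suc 0) - t (k - Suc 1) + (if 2 < k then t (k - Suc 2) else 0)"
    using nonneg k by (intro alternating_sum_le_three_terms) auto
  then have head: "(\<Sum>i<k. (-1)^i * t (k - Suc i)) \<le> t (k-1) - t (k-2) + (if 3 \<le> k then t (k-3) else 0)"
    using k by (auto simp: numeral_2_eq_2 numeral_3_eq_3 le_Suc_eq)
  have "summable (\<lambda>n. (-1)^n * t (n + k))"
    using summable_Leibniz'(1)[OF b] by (simp add: b_def)
  then have "(-1)^k * (\<Sum>j. (-1)^j * t j)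
      = (\<Sum>n. (-1)^n * t (n + k)) - (\<Sum>i<k. (-1)^i * t (k - Suc i))"
    by (rule alternating_suminf_split)
  with tail head show ?thesis by linarith
qed

section \<open>The terms \<open>a\<^sub>j \<rho>\<^sub>k\<^sup>j\<close>\<close>

lemma qq_ge_3:
  assumes q2: "3 \<le> qq a 2" and mono: "\<And>n. 2 \<le> n \<Longrightarrow> qq a n \<le> qq a (Suc n)"
    and n: "2 \<le> n"
  shows "3 \<le> qq a n"
  using n
proof (induction n rule: dec_induct)
  case (step n)
  then show ?case using mono[of n] by simp
qed (rule q2)

lemma coeff_Suc_mult_prod_qq:
  assumes pos: "\<And>n. 0 < a n" and a1: "a 1 = a 0"
  shows "a (Suc n) * (\<Prod>i=2..Suc n. qq a i) = a n"
proof (induction n)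
  case 0
  then show ?case using a1 by simp
next
  case (Suc n)
  have "a (Suc (Suc n)) * (\<Prod>i=2..Suc (Suc n). qq a i)
      = a (Suc (Suc n)) * qq a (Suc (Suc n)) * (\<Prod>i=2..Suc n. qq a i)"
    by (simp add: prod.nat_ivl_Suc')
  also have "\<dots> = a (Suc n)^2 / a n * (\<Prod>i=2..Suc n. qq a i)"
    using pos[of n] pos[of "Suc (Suc n)"] by (simp add: qq_def)
  also have "\<dots> = a (Suc n)"
    using Suc pos[of n] by (simp add: field_simps power2_eq_square)
  finally show ?case .
qed

lemma coeff_term_Suc:
  assumes "\<And>n. 0 < a n" and "a 1 = a 0"
  shows "a (Suc j) * r^Suc j * (\<Prod>i=2..Suc j. qq a i) = a j * r^j * r"
  using coeff_Suc_mult_prod_qq[OF assms, of j] by (simp add: ac_simps)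

lemma rho_pos:
  assumes "\<And>n. 2 \<le> n \<Longrightarrow> 0 < qq a n" and "1 \<le> k"
  shows "0 < rho a k"
  using assms unfolding rho_def by (intro mult_pos_pos prod_pos) auto

lemma summable_coeff_real_power:
  fixes a :: "nat \<Rightarrow> real"
  assumes "\<And>z::complex. summable (\<lambda>k. complex_of_real (a k) * z ^ k)"
  shows "summable (\<lambda>k. a k * r ^ k)"
  using assms[of "complex_of_real r"] by (simp flip: of_real_power of_real_mult)

lemma peak_term_Suc:
  fixes k :: nat
  assumes pos: "\<And>n. 0 < a n" and a1: "a 1 = a 0" and q: "\<And>n. 2 \<le> n \<Longrightarrow> 0 < qq a n"
  defines "t \<equiv> \<lambda>j. a j * rho a k ^ j" and "P \<equiv> \<lambda>n. \<Prod>i=2..n. qq a i"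
  shows "t (Suc j) * (P (Suc j) / P k) = t j * sqrt (qq a (k + 1))"
proof -
  have "t (Suc j) * P (Suc j) = t j * (P k * sqrt (qq a (k + 1)))"
    using coeff_term_Suc[OF pos a1, where r="rho a k" and j=j] by (simp add: t_def P_def rho_def)
  moreover have "0 < P k" unfolding P_def using q by (intro prod_pos) auto
  ultimately show ?thesis by (simp add: field_simps)
qed

lemma peak_terms_mono:
  assumes pos: "\<And>n. 0 < a n" and a1: "a 1 = a 0"
    and q: "\<And>n. 2 \<le> n \<Longrightarrow> 1 \<le> qq a n" and k: "1 \<le> k"
  defines "t \<equiv> \<lambda>j. a j * rho a k ^ j"
  shows peak_terms_inc: "j < k \<Longrightarrow> t j \<le> t (Suc j)"
    and peak_terms_dec: "k \<le> j \<Longrightarrow> t (Suc j) \<le> t j"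
proof -
  define P where "P n = (\<Prod>i=2..n. qq a i)" for n
  define s where "s = sqrt (qq a (Suc k))"
  have P_pos: "0 < P n" for n
    unfolding P_def using q by (intro prod_pos) (fastforce intro: order.strict_trans2)
  have P_mono: "P m \<le> P n" if "m \<le> n" for m n
    unfolding P_def using q that by (intro prod_mono2) (auto intro: order.trans[of 0 1])
  have s: "1 \<le> s" "s \<le> qq a (Suc k)"
  proof -
    show "1 \<le> s" using q[of "Suc k"] k by (simp add: s_def)
    then have "s * 1 \<le> s * s" by (intro mult_left_mono) auto
    then show "s \<le> qq a (Suc k)" using q[of "Suc k"] k by (simp add: s_def)
  qed
  have r: "rho a k = P k * s" by (simp add: rho_def P_def s_def)
  have t_pos: "0 < t j" for j
    unfolding t_def r using pos P_pos s by simp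
  have t_Suc: "t (Suc j) * P (Suc j) = t j * rho a k" for j
    unfolding t_def P_def by (rule coeff_term_Suc[OF pos a1])
  show "t j \<le> t (Suc j)" if "j < k"
  proof -
    have "P (Suc j) \<le> P k * 1" using that by (simp add: P_mono)
    also have "\<dots> \<le> rho a k" unfolding r using s P_pos[of k] by (intro mult_left_mono) auto
    finally have "t (Suc j) * P (Suc j) \<le> t (Suc j) * rho a k"
      using t_pos[of "Suc j"] by (intro mult_left_mono) auto
    then show ?thesis using t_Suc[of j] r P_pos s by simp
  qed
  show "t (Suc j) \<le> t j" if "k \<le> j"
  proof -
    have "rho a k \<le> P k * qq a (Suc k)" unfolding r using s P_pos[of k] by (intro mult_left_mono) auto
    also have "\<dots> = P (Suc k)" using k by (simp add: P_def prod.nat_ivl_Suc')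
    also have "\<dots> \<le> P (Suc j)" using that by (simp add: P_mono)
    finally have "t j * rho a k \<le> t j * P (Suc j)"
      using t_pos[of j] by (intro mult_left_mono) auto
    then have "t (Suc j) * P (Suc j) \<le> t j * P (Suc j)" using t_Suc[of j] by simp
    then show ?thesis using P_pos[of "Suc j"] by simp
  qed
qed

lemma peak_tail_terms:
  assumes pos: "\<And>n. 0 < a n" and a1: "a 1 = a 0"
    and q3: "\<And>n. 2 \<le> n \<Longrightarrow> 3 \<le> qq a n"
    and mono: "\<And>n. 2 \<le> n \<Longrightarrow> qq a n \<le> qq a (Suc n)"
    and k: "1 \<le> k"
  defines "t \<equiv> \<lambda>j. a j * rho a k ^ j" and "x \<equiv> qq a (k + 1)" and "v \<equiv> qq a (k + 2)"
  shows "t (k+1) = t k / sqrt x" "t (k+2) = t k * (1/(x*v))"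
    "t (k+3) \<le> t k * (sqrt x^3 * (1/(x*v))^3)"
proof -
  define P where "P n = (\<Prod>i=2..n. qq a i)" for n
  define s where "s = sqrt x"
  define w where "w = qq a (k + 3)"
  have q: "3 \<le> x" "x \<le> v" "v \<le> w"
    using q3[of "k+1"] mono[of "k+1"] mono[of "k+2"] k by (simp_all add: x_def v_def w_def eval_nat_numeral)
  then have s: "0 < s" "s * s = x" by (simp_all add: s_def)
  have pos_vw: "0 < v" "0 < w" using q by simp_all
  have "0 < qq a n" if "2 \<le> n" for n using q3[OF that] by simp
  then have t_Suc: "t (Suc j) * (P (Suc j) / P k) = t j * s" for j
    using peak_term_Suc[OF pos a1, where k=k and j=j] unfolding t_def P_def s_def x_def by blast
  have P_pos: "0 < P n" for n
    unfolding P_def using q3 by (intro prod_pos) (fastforce intro: order.strict_trans2)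
  have P_Suc: "P (Suc n) = P n * qq a (Suc n)" if "1 \<le> n" for n
    using that by (simp add: P_def prod.nat_ivl_Suc')
  have "t (k+1) * x = t k * s" "t (k+2) * (x*v) = t (k+1) * s" "t (k+3) * (x*v*w) = t (k+2) * s"
    using t_Suc[of k] t_Suc[of "k+1"] t_Suc[of "k+2"] P_Suc[of k] P_Suc[of "k+1"] P_Suc[of "k+2"]
      P_pos[of k] k by (simp_all add: x_def v_def w_def eval_nat_numeral)
  then have "t (k+1) * s * s = t k * s" "t (k+2) * v * s * s = t (k+1) * s"
    "t (k+3) * (v*w) * s * s = t (k+2) * s"
    unfolding s(2)[symmetric] by (simp_all add: ac_simps)
  then have tail: "t (k+1) * s = t k" "t (k+2) * v * s = t (k+1)" "t (k+3) * (v*w) * s = t (k+2)"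
    using s(1) by (metis mult_cancel_right less_irrefl)+
  then show "t (k+1) = t k / sqrt x" "t (k+2) = t k * (1/(x*v))"
    using s pos_vw by (simp_all add: s_def[symmetric] s(2)[symmetric] field_simps)
  have "0 \<le> t k" using pos[of k] rho_pos[of a k] q3 k by (fastforce simp: t_def)
  have "t (k+3) = t k / (s*s*s*v*v*w)" using tail[symmetric] s(1) pos_vw by (simp add: field_simps)
  also have "\<dots> \<le> t k / (s*s*s*v*v*v)"
    using \<open>0 \<le> t k\<close> s(1) q by (intro divide_left_mono mult_left_mono) auto
  also have "\<dots> = t k * (sqrt x^3 * (1/(x*v))^3)"
    using s by (simp add: s_def[symmetric] s(2)[symmetric] field_simps eval_nat_numeral)
  finally show "t (k+3) \<le> t k * (sqrt x^3 * (1/(x*v))^3)" .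
qed

lemma peak_head_terms:
  assumes pos: "\<And>n. 0 < a n" and a1: "a 1 = a 0"
    and q3: "\<And>n. 2 \<le> n \<Longrightarrow> 3 \<le> qq a n"
    and k: "2 \<le> k"
  defines "t \<equiv> \<lambda>j. a j * rho a k ^ j" and "u \<equiv> qq a k" and "x \<equiv> qq a (k + 1)"
  shows "t (k-1) = t k / sqrt x" "t (k-2) = t k * (1/(x*u))"
    "(if 3 \<le> k then t (k-3) else 0) \<le> t k * (sqrt x/3 * (1/(x*u))^2)"
proof -
  define P where "P n = (\<Prod>i=2..n. qq a i)" for n
  define s where "s = sqrt x"
  have q: "3 \<le> u" "3 \<le> x" using q3[of k] q3[of "k+1"] k by (simp_all add: u_def x_def)
  then have s: "0 < s" "s * s = x" by (simp_all add: s_def)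
  have P_pos: "0 < P n" for n
    unfolding P_def using q3 by (intro prod_pos) (fastforce intro: order.strict_trans2)
  have P_Suc: "P (Suc n) = P n * qq a (Suc n)" if "1 \<le> n" for n
    using that by (simp add: P_def prod.nat_ivl_Suc')
  have "0 < qq a n" if "2 \<le> n" for n using q3[OF that] by simp
  then have t_Suc: "t (Suc j) * (P (Suc j) / P k) = t j * s" for j
    using peak_term_Suc[OF pos a1, where k=k and j=j] unfolding t_def P_def s_def x_def by blast
  have P_k: "P k = P (k-1) * u" using P_Suc[of "k-1"] k by (simp add: u_def)
  have "t k = t (k-1) * s" "t (k-1) / u = t (k-2) * s"
    using t_Suc[of "k-1"] t_Suc[of "k-2"] P_k P_pos[of k] P_pos[of "k-1"] q k
    by (simp_all add: Suc_diff_Suc numeral_2_eq_2)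
  then show head: "t (k-1) = t k / sqrt x" "t (k-2) = t k * (1/(x*u))"
    using s q by (simp_all add: s_def[symmetric] s(2)[symmetric] field_simps)
  have "0 < t k" using pos[of k] rho_pos[of a k] q3 k by (fastforce simp: t_def)
  show "(if 3 \<le> k then t (k-3) else 0) \<le> t k * (sqrt x/3 * (1/(x*u))^2)"
  proof (cases "3 \<le> k")
    case True
    define p where "p = qq a (k-1)"
    have p: "3 \<le> p" using q3[of "k-1"] True by (simp add: p_def)
    have "P (k-1) = P (k-2) * p" using P_Suc[of "k-2"] True by (simp add: p_def Suc_diff_Suc numeral_2_eq_2)
    then have "t (k-2) / (u*p) = t (k-3) * s"
      using t_Suc[of "k-3"] P_k P_pos[of "k-2"] q p True
      by (simp add: Suc_diff_Suc numeral_2_eq_2 numeral_3_eq_3 field_simps)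
    then have "t (k-3) = t k / (x*u*u*p*s)"
      using head(2) s(1) q p by (simp add: field_simps)
    also have "\<dots> \<le> t k / (x*u*u*3*s)"
      using \<open>0 < t k\<close> s(1) q p by (intro divide_left_mono mult_left_mono mult_right_mono) auto
    also have "\<dots> = t k * (sqrt x/3 * (1/(x*u))^2)"
      using s q by (simp add: s_def[symmetric] s(2)[symmetric] field_simps eval_nat_numeral)
    finally show ?thesis using True by simp
  next
    case False
    then show ?thesis using \<open>0 < t k\<close> q by simp
  qed
qed

lemma peak_window_ge:
  assumes pos: "\<And>n. 0 < a n" and a1: "a 1 = a 0"
    and q3: "\<And>n. 2 \<le> n \<Longrightarrow> 3 \<le> qq a n"
    and mono: "\<And>n. 2 \<le> n \<Longrightarrow> qq a n \<le> qq a (Suc n)"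
    and k: "2 \<le> k"
  defines "t \<equiv> \<lambda>j. a j * rho a k ^ j"
    and "u \<equiv> qq a k" and "x \<equiv> qq a (k + 1)" and "v \<equiv> qq a (k + 2)"
  shows "t k * peak_estimate (sqrt x) (1/(x*u)) (1/(x*v))
    \<le> (t k - t (k+1) + t (k+2) - t (k+3)) - (t (k-1) - t (k-2) + (if 3 \<le> k then t (k-3) else 0))"
proof -
  have t: "t j = a j * rho a k ^ j" for j by (simp add: t_def)
  have "1 \<le> k" using k by simp
  note tail = peak_tail_terms[OF pos a1 q3 mono this, folded t]
  note head = peak_head_terms[OF pos a1 q3 k, folded t]
  have "t k * peak_estimate (sqrt x) (1/(x*u)) (1/(x*v))
      = t k - 2*(t k / sqrt x) + t k * (1/(x*v)) - t k * (sqrt x^3 * (1/(x*v))^3)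
        + t k * (1/(x*u)) - t k * (sqrt x/3 * (1/(x*u))^2)"
    by (simp add: peak_estimate_def algebra_simps)
  then show ?thesis using tail head unfolding u_def x_def v_def by linarith
qed

lemma peak_window_le_phi:
  assumes pos: "\<And>n. 0 < a n" and a1: "a 1 = a 0"
    and q: "\<And>n. 2 \<le> n \<Longrightarrow> 1 \<le> qq a n"
    and summable: "summable (\<lambda>j. a j * rho a k ^ j)" and k: "2 \<le> k"
  defines "t \<equiv> \<lambda>j. a j * rho a k ^ j"
  shows "(t k - t (k+1) + t (k+2) - t (k+3)) - (t (k-1) - t (k-2) + (if 3 \<le> k then t (k-3) else 0))
    \<le> (-1)^k * phi a (rho a k)"
proof -
  have "0 < qq a n" if "2 \<le> n" for n using q[OF that] by simp
  moreover have "1 \<le> k" using k by simp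
  ultimately have "0 < rho a k" using rho_pos by blast
  then have t_nonneg: "0 \<le> t j" for j using pos[of j] by (simp add: t_def)
  have "(t k - t (k+1) + t (k+2) - t (k+3)) - (t (k-1) - t (k-2) + (if 3 \<le> k then t (k-3) else 0))
      \<le> (-1)^k * (\<Sum>j. (-1)^j * t j)"
  proof (rule alternating_peak_lower_bound[OF t_nonneg])
    show "t \<longlonglongrightarrow> 0" using summable unfolding t_def by (rule summable_LIMSEQ_zero)
    show "t j \<le> t (Suc j)" if "j < k" for j
      using peak_terms_inc[OF pos a1 q _ that] k unfolding t_def by simp
    show "t (Suc j) \<le> t j" if "k \<le> j" for j
      using peak_terms_dec[OF pos a1 q _ that] k unfolding t_def by simp
  qed (rule k)
  also have "(\<Sum>j. (-1)^j * t j) = phi a (rho a k)"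
    by (simp add: phi_def t_def power_minus[of "rho a k"] mult.left_commute)
  finally show ?thesis .
qed

theorem lemma4:
  fixes a :: "nat \<Rightarrow> real"
  assumes pos: "\<And>k. a k > 0"
    and a0: "a 0 = 1" and a1: "a 1 = 1"
    and entire: "\<And>z::complex. summable (\<lambda>k. complex_of_real (a k) * z ^ k)"
    and q2: "3 \<le> qq a 2"
    and qmono: "\<And>n. n \<ge> 2 \<Longrightarrow> qq a n \<le> qq a (Suc n)"
    and cond: "\<And>j0. j0 \<ge> 2 \<Longrightarrow> qq a j0 < 4 \<Longrightarrow> qq a (j0 + 1) \<ge> 4 \<Longrightarrow>
                 qq a j0 \<ge> 3.4303 \<or> (j0 \<ge> 3 \<and> qq a (j0 - 1) / qq a (j0 + 1) \<ge> 0.525)"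
    and k: "k \<ge> 2"
  shows "(-1) ^ k * phi a (rho a k) \<ge> 0"
proof -
  have q3: "\<And>n. 2 \<le> n \<Longrightarrow> 3 \<le> qq a n" using q2 qmono by (rule qq_ge_3)
  have q: "1 \<le> qq a n" "0 < qq a n" if "2 \<le> n" for n using q3[OF that] by simp_all
  have "1 \<le> k" using k by simp
  then have rho: "0 < rho a k" using q(2) rho_pos by blast
  have a10: "a 1 = a 0" using a0 a1 by simp
  define t where "t j = a j * rho a k ^ j" for j
  have "0 \<le> peak_estimate (sqrt (qq a (k+1))) (1/(qq a (k+1)*qq a k)) (1/(qq a (k+1)*qq a (k+2)))"
  proof (rule peak_estimate_nonneg_of_q)
    show "3 \<le> qq a k" "qq a k \<le> qq a (k+1)" "qq a (k+1) \<le> qq a (k+2)"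
      using q3[OF k] qmono[of k] qmono[of "k+1"] k by simp_all
    show "qq a (k+1) < 4 \<Longrightarrow> 4 \<le> qq a (k+2) \<Longrightarrow> 3.4303 \<le> qq a (k+1) \<or> 0.525 \<le> qq a k / qq a (k+2)"
      using cond[of "k+1"] k by (simp add: numeral_2_eq_2)
  qed
  then have "0 \<le> t k * peak_estimate (sqrt (qq a (k+1))) (1/(qq a (k+1)*qq a k)) (1/(qq a (k+1)*qq a (k+2)))"
    using pos[of k] rho by (simp add: t_def)
  also have "\<dots> \<le> (t k - t (k+1) + t (k+2) - t (k+3)) - (t (k-1) - t (k-2) + (if 3 \<le> k then t (k-3) else 0))"
    by (rule peak_window_ge[OF pos a10 q3 qmono k, folded t_def])
  also have "\<dots> \<le> (-1)^k * phi a (rho a k)"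
    by (rule peak_window_le_phi[OF pos a10 q(1) summable_coeff_real_power[OF entire] k, folded t_def])
  finally show ?thesis .
qed

end
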